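(* For $M,N\in\Lambda$, if $M\to_{\mathsf v}N$ then $\mathcal A(M)=\mathcal A(N)$.
   Context: $\lambda$-terms and values are $M,N::=V\mid MN$, $V::=x\mid\lambda x.M$, up to $\alpha$-conversion. Rules: $(\beta_v)$ $(\lambda x.M)V\to M\{x:=V\}$ if $V$ is a value; $(\sigma_1)$ $(\lambda x.M)NP\to(\lambda x.MP)N$ if $x\notin\mathrm{FV}(P)$; $(\sigma_3)$ $V((\lambda x.M)N)\to(\lambda x.VM)N$ if $V$ is a value and $x\notin\mathrm{FV}(V)$. $\to_{\mathsf v}$ is the contextual closure of their union and $\twoheadrightarrow_{\mathsf v}$ its reflexive-transitive closure. $\Lambda_\bot$ is the set of $\lambda$-terms possibly containing a constant $\bot$; $\sqsubseteq$ is the smallest context-closed preorder on $\Lambda_\bot$ with $\bot\sqsubseteq x$ and $\bot\sqsubseteq\lambda x.M$. Approximants $\mathcal A$ ($k\ge0$): $A::=B\mid C$; $B::=x\mid\lambda x.A\mid\bot\mid xBA_1\cdots A_k$; $C::=(\lambda x.A)(yBA_1\cdots A_k)$. $\mathcal A(M)=\{A\in\mathcal A\mid\exists N'\in\Lambda,\ M\twoheadrightarrow_{\mathsf v}N',\ A\sqsubseteq N'\}$. *)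

theory Defs
  imports Main
begin

text \<open>Lambda terms (possibly containing the constant bottom) in de Bruijn
  representation; de Bruijn indices implement terms up to alpha-conversion.\<close>

datatype trm = Var nat | Lam trm | App trm trm | Bot

fun bot_free :: "trm \<Rightarrow> bool" where
  "bot_free (Var i) = True"
| "bot_free (Lam M) = bot_free M"
| "bot_free (App M N) = (bot_free M \<and> bot_free N)"
| "bot_free Bot = False"

fun is_value :: "trm \<Rightarrow> bool" where
  "is_value (Var i) = True"
| "is_value (Lam M) = True"
| "is_value (App M N) = False"
| "is_value Bot = False"

fun lift :: "nat \<Rightarrow> trm \<Rightarrow> trm" where
  "lift k (Var i) = (if i < k then Var i else Var (Suc i))"
| "lift k (Lam M) = Lam (lift (Suc k) M)"
| "lift k (App M N) = App (lift k M) (lift k N)"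
| "lift k Bot = Bot"

fun subst :: "trm \<Rightarrow> nat \<Rightarrow> trm \<Rightarrow> trm" where
  "subst (Var i) k s = (if i < k then Var i else if i = k then s else Var (i - 1))"
| "subst (Lam M) k s = Lam (subst M (Suc k) (lift 0 s))"
| "subst (App M N) k s = App (subst M k s) (subst N k s)"
| "subst Bot k s = Bot"

text \<open>One-step reduction: contextual closure of beta_v, sigma_1, sigma_3.
  The side conditions on free variables are built into the de Bruijn
  lifting of the moved subterm.\<close>

inductive red :: "trm \<Rightarrow> trm \<Rightarrow> bool" where
  beta_v: "is_value V \<Longrightarrow> red (App (Lam M) V) (subst M 0 V)"
| sigma1: "red (App (App (Lam M) N) P) (App (Lam (App M (lift 0 P))) N)"
| sigma3: "is_value V \<Longrightarrow> red (App V (App (Lam M) N)) (App (Lam (App (lift 0 V) M)) N)"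
| ctx_lam: "red M M' \<Longrightarrow> red (Lam M) (Lam M')"
| ctx_appL: "red M M' \<Longrightarrow> red (App M N) (App M' N)"
| ctx_appR: "red N N' \<Longrightarrow> red (App M N) (App M N')"

abbreviation reds :: "trm \<Rightarrow> trm \<Rightarrow> bool" where
  "reds \<equiv> red\<^sup>*\<^sup>*"

inductive approx_le :: "trm \<Rightarrow> trm \<Rightarrow> bool" where
  le_refl: "approx_le M M"
| le_trans: "approx_le M N \<Longrightarrow> approx_le N P \<Longrightarrow> approx_le M P"
| le_bot_var: "approx_le Bot (Var x)"
| le_bot_lam: "approx_le Bot (Lam M)"
| le_lam: "approx_le M M' \<Longrightarrow> approx_le (Lam M) (Lam M')"
| le_app: "approx_le M M' \<Longrightarrow> approx_le N N' \<Longrightarrow> approx_le (App M N) (App M' N')"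

text \<open>Approximants: A ::= B | C;  B ::= x | \<lambda>x.A | Bot | x B A1...Ak;
  C ::= (\<lambda>x.A)(y B A1...Ak).  Spines are left-nested applications.\<close>

inductive apxA :: "trm \<Rightarrow> bool" and apxB :: "trm \<Rightarrow> bool" where
  B_var: "apxB (Var x)"
| B_lam: "apxA A \<Longrightarrow> apxB (Lam A)"
| B_bot: "apxB Bot"
| B_app: "apxB B \<Longrightarrow> list_all apxA As \<Longrightarrow> apxB (foldl App (App (Var x) B) As)"
| A_B: "apxB B \<Longrightarrow> apxA B"
| A_C: "apxA A \<Longrightarrow> apxB B \<Longrightarrow> list_all apxA As \<Longrightarrow>
          apxA (App (Lam A) (foldl App (App (Var y) B) As))"

definition approximants :: "trm \<Rightarrow> trm set" where
  "approximants M = {A. apxA A \<and> (\<exists>N'. bot_free N' \<and> reds M N' \<and> approx_le A N')}"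

end

theory Submission
  imports Defs "HOL-Library.Confluence"
begin

text \<open>One inclusion is immediate, as every reduct of N is a reduct of M. For the other,
  let A be below a bot-free reduct N' of M. Confluence gives a common reduct d of N and N'.
  Confluence of the whole reduction follows by Hindley-Rosen: sigma terminates and is
  locally confluent, beta_v has the diamond property for parallel reduction, and a sigma-step
  commutes with a beta_v-step. It remains to see that A stays below d. A Bot in A
  only covers values, and A matches no redex pattern even after its Bot leaves are filled with
  values; so every redex of a term above A lies inside such a value, and reducing it there
  keeps a value.\<close>

section \<open>Abstract rewriting\<close>

definition commutep :: "('a \<Rightarrow> 'a \<Rightarrow> bool) \<Rightarrow> ('a \<Rightarrow> 'a \<Rightarrow> bool) \<Rightarrow> bool" where
  "commutep R S \<longleftrightarrow> (\<forall>a b c. R\<^sup>*\<^sup>* a b \<longrightarrow> S\<^sup>*\<^sup>* a c \<longrightarrow> (\<exists>d. S\<^sup>*\<^sup>* b d \<and> R\<^sup>*\<^sup>* c d))"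

lemma newman:
  assumes wf: "wfp R\<inverse>\<inverse>"
    and local_confl: "\<And>a b c. R a b \<Longrightarrow> R a c \<Longrightarrow> \<exists>d. R\<^sup>*\<^sup>* b d \<and> R\<^sup>*\<^sup>* c d"
  shows "confluentp R"
proof (rule confluentpI)
  show "\<exists>d. R\<^sup>*\<^sup>* b d \<and> R\<^sup>*\<^sup>* c d" if "R\<^sup>*\<^sup>* a b" "R\<^sup>*\<^sup>* a c" for a b c
    using wf that
  proof (induction a arbitrary: b c rule: wfp_induct_rule)
    case (less a)
    show ?case
    proof (cases "a = b \<or> a = c")
      case True
      then show ?thesis using less.prems by auto
    next
      case False
      then obtain b1 c1 where b1: "R a b1" "R\<^sup>*\<^sup>* b1 b" and c1: "R a c1" "R\<^sup>*\<^sup>* c1 c"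
        using less.prems by (metis converse_rtranclpE)
      obtain d where d: "R\<^sup>*\<^sup>* b1 d" "R\<^sup>*\<^sup>* c1 d"
        using local_confl[OF b1(1) c1(1)] by blast
      obtain e where e: "R\<^sup>*\<^sup>* b e" "R\<^sup>*\<^sup>* d e"
        using less.IH[OF _ b1(2) d(1)] b1(1) by blast
      obtain f where f: "R\<^sup>*\<^sup>* c f" "R\<^sup>*\<^sup>* e f"
        using less.IH[OF _ c1(2) rtranclp_trans[OF d(2) e(2)]] c1(1) by blast
      show ?thesis using e(1) f by (blast intro: rtranclp_trans)
    qed
  qed
qed

lemma commutep_if_strongly_commuting:
  assumes step: "\<And>a b c. R a b \<Longrightarrow> S a c \<Longrightarrow> \<exists>d. S\<^sup>=\<^sup>= b d \<and> R\<^sup>*\<^sup>* c d"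
  shows "commutep R S"
proof -
  have strip: "\<exists>d. S\<^sup>=\<^sup>= b d \<and> R\<^sup>*\<^sup>* c d" if "R\<^sup>*\<^sup>* a b" "S a c" for a b c
    using that
  proof (induction arbitrary: c rule: converse_rtranclp_induct)
    case base
    then show ?case by auto
  next
    case (step a a1)
    obtain d1 where d1: "S\<^sup>=\<^sup>= a1 d1" "R\<^sup>*\<^sup>* c d1"
      using assms[OF step.hyps(1) step.prems] by blast
    show ?case
    proof (cases "a1 = d1")
      case True
      then show ?thesis using d1(2) step.hyps(2) by (blast intro: rtranclp_trans)
    next
      case False
      then obtain d where "S\<^sup>=\<^sup>= b d" "R\<^sup>*\<^sup>* d1 d"
        using d1(1) step.IH by auto
      then show ?thesis using d1(2) by (blast intro: rtranclp_trans)
    qed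
  qed
  show ?thesis
    unfolding commutep_def
  proof (intro allI impI)
    fix a b c
    assume ab: "R\<^sup>*\<^sup>* a b" and "S\<^sup>*\<^sup>* a c"
    from \<open>S\<^sup>*\<^sup>* a c\<close> show "\<exists>d. S\<^sup>*\<^sup>* b d \<and> R\<^sup>*\<^sup>* c d"
    proof (induction rule: rtranclp_induct)
      case base
      then show ?case using ab by blast
    next
      case (step c1 c)
      then obtain d1 where d1: "S\<^sup>*\<^sup>* b d1" "R\<^sup>*\<^sup>* c1 d1" by blast
      obtain d where "S\<^sup>=\<^sup>= d1 d" "R\<^sup>*\<^sup>* c d"
        using strip[OF d1(2) step.hyps(2)] by blast
      then show ?case using d1(1) by (blast intro: rtranclp_trans)
    qed
  qed
qed

lemma hindley_rosen:
  assumes "confluentp R" "confluentp S" "commutep R S"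
  shows "confluentp (sup R S)"
proof -
  let ?T = "sup R\<^sup>*\<^sup>* S\<^sup>*\<^sup>*"
  have "\<exists>d. ?T b d \<and> ?T c d" if "?T a b" "?T a c" for a b c
    using that assms confluentpD[of R] confluentpD[of S]
    unfolding commutep_def sup_fun_def sup_bool_def by metis
  then have "confluentp ?T"
    by (intro strong_confluentp_imp_confluentp strong_confluentpI) blast
  then show ?thesis
    by (intro confluentpI) (metis confluentpD rtranclp_sup_rtranclp)
qed

lemma confluentp_if_same_rtranclp:
  assumes "confluentp R" "R\<^sup>*\<^sup>* = S\<^sup>*\<^sup>*"
  shows "confluentp S"
  using assms by (metis confluentpD confluentpI)

section \<open>De Bruijn arithmetic\<close>

lemma lift_lift:
  "i \<le> k \<Longrightarrow> lift (Suc k) (lift i t) = lift i (lift k t)"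
  by (induct t arbitrary: i k) auto

lemma lift_subst_low [simp]:
  "j \<le> i \<Longrightarrow> lift i (subst t j s) = subst (lift (Suc i) t) j (lift i s)"
  by (induct t arbitrary: i j s) (simp_all add: diff_Suc split: nat.split, auto simp: lift_lift)

lemma lift_subst_high:
  "i \<le> j \<Longrightarrow> lift i (subst t j s) = subst (lift i t) (Suc j) (lift i s)"
  by (induct t arbitrary: i j s) (simp_all add: lift_lift, auto)

lemma subst_lift [simp]: "subst (lift k t) k s = t"
  by (induct t arbitrary: k s) simp_all

lemma subst_subst:
  "i \<le> j \<Longrightarrow> subst (subst t (Suc j) (lift i v)) i (subst u j v) = subst (subst t i u) j v"
  by (induct t arbitrary: i j u v)
    (simp_all add: diff_Suc lift_subst_high split: nat.split,
      auto simp: lift_lift[symmetric] lift_subst_high)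

lemma is_value_lift [simp]: "is_value (lift k V) = is_value V"
  by (cases V) auto

lemma is_value_subst: "is_value V \<Longrightarrow> is_value s \<Longrightarrow> is_value (subst V k s)"
  by (cases V) auto

section \<open>The sigma and beta_v fragments of reduction\<close>

inductive sigma_red :: "trm \<Rightarrow> trm \<Rightarrow> bool" where
  sigma1: "sigma_red (App (App (Lam M) N) P) (App (Lam (App M (lift 0 P))) N)"
| sigma3: "is_value V \<Longrightarrow> sigma_red (App V (App (Lam M) N)) (App (Lam (App (lift 0 V) M)) N)"
| ctx_lam: "sigma_red M M' \<Longrightarrow> sigma_red (Lam M) (Lam M')"
| ctx_appL: "sigma_red M M' \<Longrightarrow> sigma_red (App M N) (App M' N)"
| ctx_appR: "sigma_red N N' \<Longrightarrow> sigma_red (App M N) (App M N')"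

inductive beta_red :: "trm \<Rightarrow> trm \<Rightarrow> bool" where
  beta_v: "is_value V \<Longrightarrow> beta_red (App (Lam M) V) (subst M 0 V)"
| ctx_lam: "beta_red M M' \<Longrightarrow> beta_red (Lam M) (Lam M')"
| ctx_appL: "beta_red M M' \<Longrightarrow> beta_red (App M N) (App M' N)"
| ctx_appR: "beta_red N N' \<Longrightarrow> beta_red (App M N) (App M N')"

lemma red_eq_sup_sigma_beta: "red = sup sigma_red beta_red"
proof (intro ext iffI)
  show "red M N \<Longrightarrow> sup sigma_red beta_red M N" for M N
    by (induct rule: red.induct) (auto intro: sigma_red.intros beta_red.intros)
  have "sigma_red M N \<Longrightarrow> red M N" for M N
    by (induct rule: sigma_red.induct) (auto intro: red.intros)
  moreover have "beta_red M N \<Longrightarrow> red M N" for M N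
    by (induct rule: beta_red.induct) (auto intro: red.intros)
  ultimately show "sup sigma_red beta_red M N \<Longrightarrow> red M N" for M N
    by auto
qed

lemma sigma_red_lift: "sigma_red M M' \<Longrightarrow> sigma_red (lift k M) (lift k M')"
proof (induct arbitrary: k rule: sigma_red.induct)
  case (sigma1 M N P)
  then show ?case
    using sigma_red.sigma1[of "lift (Suc k) M" "lift k N" "lift k P"] by (simp add: lift_lift)
next
  case (sigma3 V M N)
  then show ?case
    using sigma_red.sigma3[of "lift k V" "lift (Suc k) M" "lift k N"] by (simp add: lift_lift)
qed (auto intro: sigma_red.intros)

lemma sigma_red_subst:
  "sigma_red M M' \<Longrightarrow> is_value s \<Longrightarrow> sigma_red (subst M k s) (subst M' k s)"
proof (induct arbitrary: k s rule: sigma_red.induct)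
  case (sigma1 M N P)
  then show ?case
    using sigma_red.sigma1[of "subst M (Suc k) (lift 0 s)" "subst N k s" "subst P k s"]
    by (simp add: lift_subst_high)
next
  case (sigma3 V M N)
  then show ?case
    using sigma_red.sigma3[of "subst V k s" "subst M (Suc k) (lift 0 s)" "subst N k s"]
    by (simp add: lift_subst_high is_value_subst)
qed (auto intro: sigma_red.intros)

lemma sigma_red_is_value: "sigma_red V V' \<Longrightarrow> is_value V \<Longrightarrow> is_value V'"
  by (induct rule: sigma_red.induct) auto

lemma sigma_reds_Lam: "sigma_red\<^sup>*\<^sup>* M M' \<Longrightarrow> sigma_red\<^sup>*\<^sup>* (Lam M) (Lam M')"
  by (induct rule: rtranclp_induct) (auto intro: rtranclp.rtrancl_into_rtrancl sigma_red.intros)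

lemma sigma_reds_AppL: "sigma_red\<^sup>*\<^sup>* M M' \<Longrightarrow> sigma_red\<^sup>*\<^sup>* (App M N) (App M' N)"
  by (induct rule: rtranclp_induct) (auto intro: rtranclp.rtrancl_into_rtrancl sigma_red.intros)

lemma sigma_reds_AppR: "sigma_red\<^sup>*\<^sup>* N N' \<Longrightarrow> sigma_red\<^sup>*\<^sup>* (App M N) (App M N')"
  by (induct rule: rtranclp_induct) (auto intro: rtranclp.rtrancl_into_rtrancl sigma_red.intros)

lemma sigma_reds_subst_arg:
  "sigma_red N N' \<Longrightarrow> sigma_red\<^sup>*\<^sup>* (subst M k N) (subst M k N')"
proof (induct M arbitrary: k N N')
  case (Lam M)
  then show ?case by (simp add: sigma_reds_Lam sigma_red_lift)
next
  case (App M1 M2)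
  then show ?case
    using rtranclp_trans[OF sigma_reds_AppL[OF App(1)] sigma_reds_AppR[OF App(2)]] by simp
qed auto

section \<open>Confluence of sigma-reduction\<close>

text \<open>Each sigma-step moves an application under a lambda, which strictly decreases
  this product-of-sizes weight.\<close>

fun sigma_weight :: "trm \<Rightarrow> nat" where
  "sigma_weight (Var i) = 2"
| "sigma_weight Bot = 2"
| "sigma_weight (Lam M) = sigma_weight M + 1"
| "sigma_weight (App M N) = sigma_weight M * sigma_weight N"

lemma sigma_weight_ge_2: "sigma_weight t \<ge> 2"
proof (induct t)
  case (App t1 t2)
  then have "2 * 1 \<le> sigma_weight t1 * sigma_weight t2" by (intro mult_mono) auto
  then show ?case by simp
qed auto

lemma sigma_weight_lift [simp]: "sigma_weight (lift k t) = sigma_weight t"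
  by (induct t arbitrary: k) auto

lemma sigma_red_weight_less: "sigma_red M N \<Longrightarrow> sigma_weight N < sigma_weight M"
proof (induct rule: sigma_red.induct)
  case (sigma1 M N P)
  have "sigma_weight M * sigma_weight P + 1 < (sigma_weight M + 1) * sigma_weight P"
    using sigma_weight_ge_2[of P] by (simp add: algebra_simps)
  then show ?case
    using sigma_weight_ge_2[of N] by (simp add: algebra_simps)
next
  case (sigma3 V M N)
  have "sigma_weight V * sigma_weight M + 1 < sigma_weight V * (sigma_weight M + 1)"
    using sigma_weight_ge_2[of V] by (simp add: algebra_simps)
  then show ?case
    using sigma_weight_ge_2[of N] by (simp add: algebra_simps)
next
  case (ctx_appL M M' N)
  then show ?case using sigma_weight_ge_2[of N] by simp
next
  case (ctx_appR N N' M)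
  then show ?case using sigma_weight_ge_2[of M] by simp
qed auto

lemma sigma1_joinable:
  assumes "sigma_red (App (App (Lam M) N) P) c"
  shows "\<exists>d. sigma_red\<^sup>*\<^sup>* (App (Lam (App M (lift 0 P))) N) d \<and> sigma_red\<^sup>*\<^sup>* c d"
  using assms
proof cases
  case sigma1
  then show ?thesis by auto
next
  case (ctx_appL X)
  from ctx_appL(2) show ?thesis
  proof cases
    case (sigma3 K L)
    let ?d = "App (Lam (App (lift 0 (Lam (App M (lift 0 P)))) K)) L"
    have "sigma_red (App (Lam (App M (lift 0 P))) N) ?d"
      using sigma3 sigma_red.sigma3[of "Lam (App M (lift 0 P))" K L] by simp
    moreover have "sigma_red c (App (Lam (App (App (lift 0 (Lam M)) K) (lift 0 P))) L)"
      using ctx_appL sigma3 by (auto intro: sigma_red.intros)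
    moreover have "sigma_red (App (Lam (App (App (lift 0 (Lam M)) K) (lift 0 P))) L) ?d"
      using sigma_red.sigma1[of "lift 1 M" K "lift 0 P"]
      by (auto intro!: sigma_red.intros simp: lift_lift)
    ultimately show ?thesis by (meson r_into_rtranclp rtranclp.rtrancl_into_rtrancl)
  next
    case (ctx_appL M1)
    from ctx_appL(2) obtain M' where "M1 = Lam M'" "sigma_red M M'" by cases auto
    then show ?thesis using ctx_appL \<open>c = App X P\<close>
      by (intro exI[of _ "App (Lam (App M' (lift 0 P))) N"])
        (auto intro!: r_into_rtranclp intro: sigma_red.intros)
  next
    case (ctx_appR N')
    then show ?thesis using \<open>c = App X P\<close>
      by (intro exI[of _ "App (Lam (App M (lift 0 P))) N'"])
        (auto intro!: r_into_rtranclp intro: sigma_red.intros)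
  qed
next
  case (ctx_appR P')
  then show ?thesis
    by (intro exI[of _ "App (Lam (App M (lift 0 P'))) N"])
      (auto intro!: r_into_rtranclp intro: sigma_red.intros sigma_red_lift)
qed auto

lemma sigma3_joinable:
  assumes "sigma_red (App V (App (Lam M) N)) c" "is_value V"
  shows "\<exists>d. sigma_red\<^sup>*\<^sup>* (App (Lam (App (lift 0 V) M)) N) d \<and> sigma_red\<^sup>*\<^sup>* c d"
  using assms
proof cases
  case sigma3
  then show ?thesis by auto
next
  case (ctx_appL V')
  then show ?thesis using sigma_red_is_value[OF ctx_appL(2) assms(2)]
    by (intro exI[of _ "App (Lam (App (lift 0 V') M)) N"])
      (auto intro!: r_into_rtranclp intro: sigma_red.intros sigma_red_lift)
next
  case (ctx_appR X)
  from ctx_appR(2) show ?thesis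
  proof cases
    case (sigma3 K L)
    let ?d = "App (Lam (App (lift 0 (Lam (App (lift 0 V) M))) K)) L"
    have "sigma_red (App (Lam (App (lift 0 V) M)) N) ?d"
      using sigma3 sigma_red.sigma3[of "Lam (App (lift 0 V) M)" K L] by simp
    moreover have "sigma_red c (App (Lam (App (lift 0 V) (App (lift 0 (Lam M)) K))) L)"
      using ctx_appR sigma3 assms(2) by (auto intro: sigma_red.intros)
    moreover have "sigma_red (App (Lam (App (lift 0 V) (App (lift 0 (Lam M)) K))) L) ?d"
      using sigma_red.sigma3[of "lift 0 V" "lift 1 M" K] assms(2)
      by (auto intro!: sigma_red.intros simp: lift_lift)
    ultimately show ?thesis by (meson r_into_rtranclp rtranclp.rtrancl_into_rtrancl)
  next
    case (ctx_appL M1)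
    from ctx_appL(2) obtain M' where "M1 = Lam M'" "sigma_red M M'" by cases auto
    then show ?thesis using ctx_appL \<open>c = App V X\<close> assms(2)
      by (intro exI[of _ "App (Lam (App (lift 0 V) M')) N"])
        (auto intro!: r_into_rtranclp intro: sigma_red.intros)
  next
    case (ctx_appR N')
    then show ?thesis using \<open>c = App V X\<close> assms(2)
      by (intro exI[of _ "App (Lam (App (lift 0 V) M)) N'"])
        (auto intro!: r_into_rtranclp intro: sigma_red.intros)
  qed
qed auto

lemma sigma_red_locally_confluent:
  "sigma_red a b \<Longrightarrow> sigma_red a c \<Longrightarrow> \<exists>d. sigma_red\<^sup>*\<^sup>* b d \<and> sigma_red\<^sup>*\<^sup>* c d"
proof (induct arbitrary: c rule: sigma_red.induct)
  case (sigma1 M N P)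
  then show ?case by (rule sigma1_joinable)
next
  case (sigma3 V M N)
  then show ?case using sigma3_joinable by blast
next
  case (ctx_lam M M')
  from ctx_lam(3) show ?case
  proof cases
    case (ctx_lam M'')
    then show ?thesis using ctx_lam.hyps(2)[of M''] by (auto intro: sigma_reds_Lam)
  qed
next
  case (ctx_appL M M' N)
  from ctx_appL(3) show ?case
  proof cases
    case (sigma1 M1 N1)
    then show ?thesis
      using sigma1_joinable[of M1 N1 N "App M' N"] ctx_appL.hyps(1)
      by (blast intro: sigma_red.intros)
  next
    case (sigma3 M1 N1)
    then show ?thesis
      using sigma3_joinable[of M M1 N1 "App M' N"] ctx_appL.hyps(1)
      by (blast intro: sigma_red.intros)
  next
    case (ctx_appL M'')
    then show ?thesis using ctx_appL.hyps(2)[of M''] by (auto intro: sigma_reds_AppL)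
  next
    case (ctx_appR N')
    then show ?thesis using ctx_appL.hyps(1)
      by (intro exI[of _ "App M' N'"]) (auto intro!: r_into_rtranclp intro: sigma_red.intros)
  qed
next
  case (ctx_appR N N' M)
  from ctx_appR(3) show ?case
  proof cases
    case (sigma1 M1 N1)
    then show ?thesis
      using sigma1_joinable[of M1 N1 N "App M N'"] ctx_appR.hyps(1)
      by (blast intro: sigma_red.intros)
  next
    case (sigma3 M1 N1)
    then show ?thesis
      using sigma3_joinable[of M M1 N1 "App M N'"] ctx_appR.hyps(1)
      by (blast intro: sigma_red.intros)
  next
    case (ctx_appR N'')
    then show ?thesis using ctx_appR.hyps(2)[of N''] by (auto intro: sigma_reds_AppR)
  next
    case (ctx_appL M')
    then show ?thesis using ctx_appR.hyps(1)
      by (intro exI[of _ "App M' N'"]) (auto intro!: r_into_rtranclp intro: sigma_red.intros)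
  qed
qed

lemma confluentp_sigma_red: "confluentp sigma_red"
proof (rule newman)
  show "wfp sigma_red\<inverse>\<inverse>"
    by (rule wfp_if_convertible_to_nat[of _ sigma_weight]) (simp add: sigma_red_weight_less)
qed (rule sigma_red_locally_confluent)

section \<open>Confluence of beta_v-reduction\<close>

inductive par_beta :: "trm \<Rightarrow> trm \<Rightarrow> bool" where
  var: "par_beta (Var i) (Var i)"
| bot: "par_beta Bot Bot"
| lam: "par_beta M M' \<Longrightarrow> par_beta (Lam M) (Lam M')"
| app: "par_beta M M' \<Longrightarrow> par_beta N N' \<Longrightarrow> par_beta (App M N) (App M' N')"
| beta_v: "par_beta M M' \<Longrightarrow> par_beta V V' \<Longrightarrow> is_value V \<Longrightarrow>
    par_beta (App (Lam M) V) (subst M' 0 V')"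

fun complete_dev :: "trm \<Rightarrow> trm" where
  "complete_dev (Var i) = Var i"
| "complete_dev Bot = Bot"
| "complete_dev (Lam M) = Lam (complete_dev M)"
| "complete_dev (App (Lam M) N) =
    (if is_value N then subst (complete_dev M) 0 (complete_dev N)
     else App (Lam (complete_dev M)) (complete_dev N))"
| "complete_dev (App M N) = App (complete_dev M) (complete_dev N)"

lemma par_beta_refl [simp]: "par_beta M M"
  by (induct M) (auto intro: par_beta.intros)

lemma par_beta_is_value: "par_beta V V' \<Longrightarrow> is_value V \<Longrightarrow> is_value V'"
  by (induct rule: par_beta.induct) auto

lemma par_beta_lift: "par_beta M M' \<Longrightarrow> par_beta (lift k M) (lift k M')"
proof (induct arbitrary: k rule: par_beta.induct)
  case (beta_v M M' V V')
  then show ?case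
    using par_beta.beta_v[of "lift (Suc k) M" "lift (Suc k) M'" "lift k V" "lift k V'"] by simp
qed (auto intro: par_beta.intros)

lemma par_beta_subst:
  "par_beta M M' \<Longrightarrow> par_beta N N' \<Longrightarrow> is_value N \<Longrightarrow>
    par_beta (subst M k N) (subst M' k N')"
proof (induct arbitrary: k N N' rule: par_beta.induct)
  case (lam M M')
  then show ?case by (simp add: par_beta.lam par_beta_lift)
next
  case (beta_v M M' V V')
  have "par_beta (App (Lam (subst M (Suc k) (lift 0 N))) (subst V k N))
     (subst (subst M' (Suc k) (lift 0 N')) 0 (subst V' k N'))"
    using beta_v par_beta_lift by (intro par_beta.beta_v) (auto intro: is_value_subst)
  then show ?case by (simp add: subst_subst[of 0 k, symmetric])
qed (auto intro: par_beta.intros)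

lemma par_beta_complete_dev: "par_beta M N \<Longrightarrow> par_beta N (complete_dev M)"
proof (induct rule: par_beta.induct)
  case (app M M' N N')
  show ?case
  proof (cases "\<exists>K. M = Lam K \<and> is_value N")
    case True
    then obtain K where K: "M = Lam K" "is_value N" by blast
    with app obtain K' where "M' = Lam K'" "par_beta K' (complete_dev K)"
      by (auto elim: par_beta.cases)
    then show ?thesis using app K par_beta_is_value by (auto intro: par_beta.beta_v)
  next
    case False
    then have "complete_dev (App M N) = App (complete_dev M) (complete_dev N)"
      by (cases M) auto
    then show ?thesis using app by (simp add: par_beta.app)
  qed
next
  case (beta_v M M' V V')
  then show ?case by (simp add: par_beta_subst par_beta_is_value)
qed (auto intro: par_beta.intros)

lemma beta_red_into_par_beta: "beta_red M N \<Longrightarrow> par_beta M N"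
  by (induct rule: beta_red.induct) (auto intro: par_beta.intros)

lemma beta_reds_Lam: "beta_red\<^sup>*\<^sup>* M M' \<Longrightarrow> beta_red\<^sup>*\<^sup>* (Lam M) (Lam M')"
  by (induct rule: rtranclp_induct) (auto intro: rtranclp.rtrancl_into_rtrancl beta_red.intros)

lemma beta_reds_App:
  "beta_red\<^sup>*\<^sup>* M M' \<Longrightarrow> beta_red\<^sup>*\<^sup>* N N' \<Longrightarrow> beta_red\<^sup>*\<^sup>* (App M N) (App M' N')"
proof -
  have "beta_red\<^sup>*\<^sup>* M M' \<Longrightarrow> beta_red\<^sup>*\<^sup>* (App M N) (App M' N)" for M M' N
    by (induct rule: rtranclp_induct) (auto intro: rtranclp.rtrancl_into_rtrancl beta_red.intros)
  moreover have "beta_red\<^sup>*\<^sup>* N N' \<Longrightarrow> beta_red\<^sup>*\<^sup>* (App M N) (App M N')" for M N N'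
    by (induct rule: rtranclp_induct) (auto intro: rtranclp.rtrancl_into_rtrancl beta_red.intros)
  ultimately show "beta_red\<^sup>*\<^sup>* M M' \<Longrightarrow> beta_red\<^sup>*\<^sup>* N N' \<Longrightarrow> ?thesis"
    by (blast intro: rtranclp_trans)
qed

lemma par_beta_into_beta_reds: "par_beta M N \<Longrightarrow> beta_red\<^sup>*\<^sup>* M N"
proof (induct rule: par_beta.induct)
  case (beta_v M M' V V')
  then have "beta_red\<^sup>*\<^sup>* (App (Lam M) V) (App (Lam M') V')"
    by (simp add: beta_reds_App beta_reds_Lam)
  moreover have "beta_red (App (Lam M') V') (subst M' 0 V')"
    using beta_v par_beta_is_value by (auto intro: beta_red.beta_v)
  ultimately show ?case by simp
qed (auto intro: beta_reds_Lam beta_reds_App)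

lemma rtranclp_par_beta_eq: "par_beta\<^sup>*\<^sup>* = beta_red\<^sup>*\<^sup>*"
proof (intro ext iffI)
  show "par_beta\<^sup>*\<^sup>* M N \<Longrightarrow> beta_red\<^sup>*\<^sup>* M N" for M N
    by (induct rule: rtranclp_induct) (auto dest: par_beta_into_beta_reds)
  show "beta_red\<^sup>*\<^sup>* M N \<Longrightarrow> par_beta\<^sup>*\<^sup>* M N" for M N
    by (induct rule: rtranclp_induct) (auto dest: beta_red_into_par_beta)
qed

lemma confluentp_beta_red: "confluentp beta_red"
proof -
  have "strong_confluentp par_beta"
    by (rule strong_confluentpI) (blast intro: par_beta_complete_dev)
  then have "confluentp par_beta"
    by (rule strong_confluentp_imp_confluentp)
  then show ?thesis
    using rtranclp_par_beta_eq by (rule confluentp_if_same_rtranclp)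
qed

section \<open>Commutation of sigma and beta_v\<close>

lemma beta_red_lift: "beta_red M M' \<Longrightarrow> beta_red (lift k M) (lift k M')"
proof (induct arbitrary: k rule: beta_red.induct)
  case (beta_v V M)
  then show ?case using beta_red.beta_v[of "lift k V" "lift (Suc k) M"] by simp
qed (auto intro: beta_red.intros)

lemma beta_red_is_value: "beta_red V V' \<Longrightarrow> is_value V \<Longrightarrow> is_value V'"
  by (induct rule: beta_red.induct) auto

lemma sigma1_beta_commute:
  assumes "beta_red (App (App (Lam M) N) P) c"
  shows "\<exists>d. beta_red\<^sup>=\<^sup>= (App (Lam (App M (lift 0 P))) N) d \<and> sigma_red\<^sup>*\<^sup>* c d"
  using assms
proof cases
  case (ctx_appL X)
  from ctx_appL(2) show ?thesis
  proof cases
    case beta_v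
    then have "beta_red (App (Lam (App M (lift 0 P))) N) c"
      using ctx_appL beta_red.beta_v[of N "App M (lift 0 P)"] by simp
    then show ?thesis by blast
  next
    case (ctx_appL M1)
    from ctx_appL(2) obtain M' where "M1 = Lam M'" "beta_red M M'" by cases auto
    then show ?thesis using ctx_appL \<open>c = App X P\<close>
      by (intro exI[of _ "App (Lam (App M' (lift 0 P))) N"])
        (auto intro: beta_red.intros sigma_red.intros)
  next
    case (ctx_appR N')
    then show ?thesis using \<open>c = App X P\<close>
      by (intro exI[of _ "App (Lam (App M (lift 0 P))) N'"])
        (auto intro: beta_red.intros sigma_red.intros)
  qed
next
  case (ctx_appR P')
  then show ?thesis
    by (intro exI[of _ "App (Lam (App M (lift 0 P'))) N"])
      (auto intro: beta_red.intros sigma_red.intros beta_red_lift)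
qed

lemma sigma3_beta_commute:
  assumes "beta_red (App V (App (Lam M) N)) c" "is_value V"
  shows "\<exists>d. beta_red\<^sup>=\<^sup>= (App (Lam (App (lift 0 V) M)) N) d \<and> sigma_red\<^sup>*\<^sup>* c d"
  using assms
proof cases
  case (ctx_appL V')
  then show ?thesis using beta_red_is_value[OF ctx_appL(2) assms(2)]
    by (intro exI[of _ "App (Lam (App (lift 0 V') M)) N"])
      (auto intro: beta_red.intros sigma_red.intros beta_red_lift)
next
  case (ctx_appR X)
  from ctx_appR(2) show ?thesis
  proof cases
    case beta_v
    then have "beta_red (App (Lam (App (lift 0 V) M)) N) c"
      using ctx_appR beta_red.beta_v[of N "App (lift 0 V) M"] by simp
    then show ?thesis by blast
  next
    case (ctx_appL M1)
    from ctx_appL(2) obtain M' where "M1 = Lam M'" "beta_red M M'" by cases auto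
    then show ?thesis using ctx_appL \<open>c = App V X\<close> assms(2)
      by (intro exI[of _ "App (Lam (App (lift 0 V) M')) N"])
        (auto intro: beta_red.intros sigma_red.intros)
  next
    case (ctx_appR N')
    then show ?thesis using \<open>c = App V X\<close> assms(2)
      by (intro exI[of _ "App (Lam (App (lift 0 V) M)) N'"])
        (auto intro: beta_red.intros sigma_red.intros)
  qed
qed (use assms(2) in auto)

lemma sigma_beta_strongly_commute:
  "sigma_red a b \<Longrightarrow> beta_red a c \<Longrightarrow> \<exists>d. beta_red\<^sup>=\<^sup>= b d \<and> sigma_red\<^sup>*\<^sup>* c d"
proof (induct arbitrary: c rule: sigma_red.induct)
  case (sigma1 M N P)
  then show ?case by (rule sigma1_beta_commute)
next
  case (sigma3 V M N)
  then show ?case using sigma3_beta_commute by blast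
next
  case (ctx_lam M M')
  from ctx_lam(3) show ?case
  proof cases
    case (ctx_lam M'')
    then obtain d where "beta_red\<^sup>=\<^sup>= M' d" "sigma_red\<^sup>*\<^sup>* M'' d" using ctx_lam.hyps(2) by blast
    then show ?thesis using ctx_lam
      by (intro exI[of _ "Lam d"]) (auto intro: beta_red.intros sigma_reds_Lam)
  qed
next
  case (ctx_appL M M' N)
  from ctx_appL(3) show ?case
  proof cases
    case (beta_v K)
    with ctx_appL.hyps(1) obtain K' where "M' = Lam K'" "sigma_red K K'"
      by (auto elim: sigma_red.cases)
    then show ?thesis using beta_v
      by (intro exI[of _ "subst K' 0 N"]) (auto intro: beta_red.intros sigma_red_subst)
  next
    case (ctx_appL M'')
    then obtain d where "beta_red\<^sup>=\<^sup>= M' d" "sigma_red\<^sup>*\<^sup>* M'' d" using ctx_appL.hyps(2) by blast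
    then show ?thesis using ctx_appL
      by (intro exI[of _ "App d N"]) (auto intro: beta_red.intros sigma_reds_AppL)
  next
    case (ctx_appR N')
    then show ?thesis using ctx_appL.hyps(1)
      by (intro exI[of _ "App M' N'"]) (auto intro: beta_red.intros sigma_red.intros)
  qed
next
  case (ctx_appR N N' M)
  from ctx_appR(3) show ?case
  proof cases
    case (beta_v K)
    then show ?thesis using ctx_appR.hyps(1) sigma_red_is_value
      by (intro exI[of _ "subst K 0 N'"]) (auto intro: beta_red.intros sigma_reds_subst_arg)
  next
    case (ctx_appR N'')
    then obtain d where "beta_red\<^sup>=\<^sup>= N' d" "sigma_red\<^sup>*\<^sup>* N'' d" using ctx_appR.hyps(2) by blast
    then show ?thesis using ctx_appR
      by (intro exI[of _ "App M d"]) (auto intro: beta_red.intros sigma_reds_AppR)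
  next
    case (ctx_appL M')
    then show ?thesis using ctx_appR.hyps(1)
      by (intro exI[of _ "App M' N'"]) (auto intro: beta_red.intros sigma_red.intros)
  qed
qed

lemma confluentp_red: "confluentp red"
  unfolding red_eq_sup_sigma_beta
  using confluentp_sigma_red confluentp_beta_red
    commutep_if_strongly_commuting[OF sigma_beta_strongly_commute]
  by (rule hindley_rosen)

section \<open>Approximants are stable under reduction\<close>

fun below :: "trm \<Rightarrow> trm \<Rightarrow> bool" where
  "below Bot t \<longleftrightarrow> t = Bot \<or> is_value t"
| "below (Var i) t \<longleftrightarrow> t = Var i"
| "below (Lam a) t \<longleftrightarrow> (case t of Lam b \<Rightarrow> below a b | _ \<Rightarrow> False)"
| "below (App a b) t \<longleftrightarrow> (case t of App c d \<Rightarrow> below a c \<and> below b d | _ \<Rightarrow> False)"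

lemma below_refl: "below t t"
  by (induct t) auto

lemma below_trans: "below a b \<Longrightarrow> below b c \<Longrightarrow> below a c"
proof (induct a arbitrary: b c)
  case (Var x)
  then show ?case by auto
next
  case (Lam a)
  then show ?case by (cases b; cases c) auto
next
  case (App a1 a2)
  then show ?case by (cases b; cases c) auto
next
  case Bot
  then show ?case by (cases b; cases c) auto
qed

lemma approx_le_iff_below: "approx_le s t \<longleftrightarrow> below s t"
proof
  show "approx_le s t \<Longrightarrow> below s t"
    by (induct rule: approx_le.induct) (auto intro: below_refl below_trans)
  show "below s t \<Longrightarrow> approx_le s t"
  proof (induct s arbitrary: t)
    case (Lam a)
    then show ?case by (cases t) (auto intro: approx_le.intros)
  next
    case (App a1 a2)
    then show ?case by (cases t) (auto intro: approx_le.intros)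
  next
    case Bot
    then show ?case by (cases t) (auto intro: approx_le.intros)
  qed (auto intro: approx_le.intros)
qed

definition neutral_apx :: "trm \<Rightarrow> bool" where
  "neutral_apx h \<longleftrightarrow>
    (\<exists>x B As. h = foldl App (App (Var x) B) As \<and> apxB B \<and> list_all apxA As)"

lemma foldl_App_is_App: "\<exists>a b. foldl App (App h B) As = App a b"
  by (induct As arbitrary: h B) auto

lemma neutral_apx_App_iff:
  "neutral_apx (App h A) \<longleftrightarrow> (\<exists>x. h = Var x \<and> apxB A) \<or> (neutral_apx h \<and> apxA A)"
proof
  assume "neutral_apx (App h A)"
  then obtain x B As where
    h: "App h A = foldl App (App (Var x) B) As" "apxB B" "list_all apxA As"
    unfolding neutral_apx_def by blast
  show "(\<exists>x. h = Var x \<and> apxB A) \<or> (neutral_apx h \<and> apxA A)"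
  proof (cases As rule: rev_cases)
    case Nil
    then show ?thesis using h by simp
  next
    case (snoc As' A')
    then show ?thesis using h unfolding neutral_apx_def by auto
  qed
next
  assume "(\<exists>x. h = Var x \<and> apxB A) \<or> (neutral_apx h \<and> apxA A)"
  then show "neutral_apx (App h A)"
  proof
    assume "\<exists>x. h = Var x \<and> apxB A"
    then obtain x where "h = Var x" "apxB A" by blast
    then show ?thesis unfolding neutral_apx_def
      by (intro exI[of _ x] exI[of _ A] exI[of _ "[]"]) simp
  next
    assume "neutral_apx h \<and> apxA A"
    then obtain x B As where "h = foldl App (App (Var x) B) As" "apxB B" "list_all apxA As" "apxA A"
      unfolding neutral_apx_def by blast
    then show ?thesis unfolding neutral_apx_def
      by (intro exI[of _ x] exI[of _ B] exI[of _ "As @ [A]"]) simp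
  qed
qed

lemma neutral_apx_is_App: "neutral_apx h \<Longrightarrow> \<exists>a b. h = App a b"
  unfolding neutral_apx_def using foldl_App_is_App by blast

lemma apxB_if_neutral_apx: "neutral_apx h \<Longrightarrow> apxB h"
  unfolding neutral_apx_def by (blast intro: B_app)

lemma apxB_cases:
  "apxB t \<Longrightarrow> (\<exists>x. t = Var x) \<or> (\<exists>A. t = Lam A \<and> apxA A) \<or> t = Bot \<or> neutral_apx t"
  by (erule apxB.cases) (auto simp: neutral_apx_def)

lemma apxA_App_cases:
  assumes "apxA (App a b)"
  shows "(\<exists>x. a = Var x \<and> apxB b) \<or> (neutral_apx a \<and> apxA b)
    \<or> (\<exists>A. a = Lam A \<and> apxA A \<and> neutral_apx b)"
  using assms
proof cases
  case A_B
  then show ?thesis using apxB_cases neutral_apx_App_iff by blast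
next
  case (A_C A B As y)
  then have "neutral_apx b" unfolding neutral_apx_def by blast
  then show ?thesis using A_C by blast
qed

lemma apxA_App_args: "apxA (App a b) \<Longrightarrow> apxA a \<and> apxA b"
  using apxA_App_cases[of a b]
  by (auto intro: A_B B_var B_lam apxB_if_neutral_apx)

lemma apxA_Lam_body: "apxA (Lam a) \<Longrightarrow> apxA a"
  by (auto elim: apxA.cases dest: apxB_cases neutral_apx_is_App)

lemma neutral_apx_below:
  "neutral_apx h \<Longrightarrow> below h N \<Longrightarrow> \<not> is_value N \<and> (\<forall>M P. N \<noteq> App (Lam M) P)"
proof (induct h arbitrary: N)
  case (App a b)
  then obtain c d where N: "N = App c d" "below a c" by (cases N) auto
  from App.prems(1) have "(\<exists>x. a = Var x) \<or> neutral_apx a"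
    by (auto simp: neutral_apx_App_iff)
  then show ?case using N App.hyps(1)[of c] by auto
qed (auto dest: neutral_apx_is_App)

definition root_redex :: "trm \<Rightarrow> bool" where
  "root_redex R \<longleftrightarrow> (\<exists>M V. R = App (Lam M) V \<and> is_value V)
    \<or> (\<exists>M N P. R = App (App (Lam M) N) P)
    \<or> (\<exists>V M N. R = App V (App (Lam M) N) \<and> is_value V)"

lemma below_root_redex_not_apxA: "below A R \<Longrightarrow> root_redex R \<Longrightarrow> \<not> apxA A"
proof
  assume A: "below A R" "root_redex R" "apxA A"
  then obtain P Q where R: "R = App P Q" unfolding root_redex_def by blast
  with A(1) obtain a b where ab: "A = App a b" "below a P" "below b Q"
    by (cases A) auto
  from A(3) ab(1) have "apxA (App a b)" by simp
  from apxA_App_cases[OF this] show False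
  proof (elim disjE exE conjE)
    fix x
    assume "a = Var x" "apxB b"
    then show False
      using A(2) R ab(2,3) by (auto simp: root_redex_def dest!: apxB_cases neutral_apx_below)
  next
    assume "neutral_apx a"
    then show False
      using A(2) R ab(2) by (auto simp: root_redex_def dest!: neutral_apx_below)
  next
    fix A'
    assume "a = Lam A'" "neutral_apx b"
    then show False
      using A(2) R ab(2,3) by (auto simp: root_redex_def dest!: neutral_apx_below)
  qed
qed

lemma red_preserves_below_apxA:
  "red N N' \<Longrightarrow> apxA A \<Longrightarrow> below A N \<Longrightarrow> below A N'"
proof (induct arbitrary: A rule: red.induct)
  case (ctx_lam M M')
  then show ?case by (cases A) (auto dest: apxA_Lam_body)
next
  case (ctx_appL M M' N)
  then show ?case by (cases A) (auto dest: apxA_App_args)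
next
  case (ctx_appR N N' M)
  then show ?case by (cases A) (auto dest: apxA_App_args)
qed (auto simp: root_redex_def dest: below_root_redex_not_apxA)

lemma reds_preserves_below_apxA:
  "reds N N' \<Longrightarrow> apxA A \<Longrightarrow> below A N \<Longrightarrow> below A N'"
  by (induct rule: rtranclp_induct) (auto dest: red_preserves_below_apxA)

lemma bot_free_lift [simp]: "bot_free (lift k t) = bot_free t"
  by (induct t arbitrary: k) auto

lemma bot_free_subst: "bot_free t \<Longrightarrow> bot_free s \<Longrightarrow> bot_free (subst t k s)"
  by (induct t arbitrary: k s) auto

lemma red_bot_free: "red M N \<Longrightarrow> bot_free M \<Longrightarrow> bot_free N"
  by (induct rule: red.induct) (auto simp: bot_free_subst)

lemma reds_bot_free: "reds M N \<Longrightarrow> bot_free M \<Longrightarrow> bot_free N"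
  by (induct rule: rtranclp_induct) (auto dest: red_bot_free)

theorem lemma2p6:
  assumes "bot_free M" and "bot_free N" and "red M N"
  shows "approximants M = approximants N"
proof
  show "approximants N \<subseteq> approximants M"
    using \<open>red M N\<close> unfolding approximants_def by (blast intro: converse_rtranclp_into_rtranclp)
next
  show "approximants M \<subseteq> approximants N"
  proof
    fix A
    assume "A \<in> approximants M"
    then obtain N' where A: "apxA A" "bot_free N'" "reds M N'" "below A N'"
      unfolding approximants_def approx_le_iff_below by blast
    obtain d where d: "reds N d" "reds N' d"
      using confluentpD[OF confluentp_red r_into_rtranclp[of red, OF \<open>red M N\<close>] A(3)] by blast
    have "below A d" using reds_preserves_below_apxA[OF d(2) A(1,4)] .
    moreover have "bot_free d" using reds_bot_free[OF d(2) A(2)] .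
    ultimately show "A \<in> approximants N"
      unfolding approximants_def approx_le_iff_below using A(1) d(1) by blast
  qed
qed

end
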